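(* Let $n>0$ be an integer, $C_1>0$ a constant, and let $P$ be a real monic polynomial of degree $n$ in one real variable. For each integer $k\geq 0$ let $\tilde{P}_k(x):=2^{-nk}P(2^kx)$ and $$E_k:=\left\{x\in\mathbb{R}:\ \left|\frac{\tilde{P}_k(x)}{\tilde{P}_k'(x)}\right|\leq\frac{4}{C_1}\ \text{and}\ \left(\frac{\tilde{P}_k}{\tilde{P}_k'}\right)'(x)\leq\frac{1}{8n}\right\}.$$ Then for any $\alpha\in(0,1)$, $\sum_{k\geq 0}|E_k|^{\alpha}\leq C$, where $C$ depends only on $n$ and $C_1$ (and not on the coefficients of $P$).
   Context: $|E|$ denotes the Lebesgue measure of $E\subset\mathbb{R}$. *)

theory Defs
  imports "HOL-Analysis.Analysis" "HOL-Computational_Algebra.Polynomial"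
begin

definition Ptil :: "nat \<Rightarrow> real poly \<Rightarrow> nat \<Rightarrow> real \<Rightarrow> real" where
  "Ptil n P k = (\<lambda>x. 2 powr (- (real n * real k)) * poly P (2 ^ k * x))"

text \<open>The set E_k. The quotient P~_k / P~_k' is only defined where P~_k' is nonzero,
  so such points are required (this excludes finitely many points only).\<close>
definition Eset :: "nat \<Rightarrow> real \<Rightarrow> real poly \<Rightarrow> nat \<Rightarrow> real set" where
  "Eset n C1 P k = {x. deriv (Ptil n P k) x \<noteq> 0 \<and>
      \<bar>Ptil n P k x / deriv (Ptil n P k) x\<bar> \<le> 4 / C1 \<and>
      deriv (\<lambda>y. Ptil n P k y / deriv (Ptil n P k) y) x \<le> 1 / (8 * real n)}"

end

theory Submission
  imports Defs "HOL-Computational_Algebra.Fundamental_Theorem_Algebra"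
begin

text \<open>
  Factor \<open>P = (\<Prod>i<n. X - r\<^sub>i)\<close> over \<open>\<complex>\<close>. At a point \<open>y\<close> put \<open>h = P(y)/P'(y)\<close> and
  \<open>z\<^sub>i = h/(y - r\<^sub>i)\<close>; then \<open>\<Sum> z\<^sub>i = 1\<close> and \<open>\<Sum> z\<^sub>i\<^sup>2 = (P/P')'(y)\<close>. If \<open>(P/P')'(y) \<le> 1/(8n)\<close>,
  Cauchy-Schwarz for the real parts forces \<open>\<Sum> (Im z\<^sub>i)\<^sup>2 \<ge> 7/(8n)\<close>, so \<open>(Im z\<^sub>i)\<^sup>2 \<ge> 7/(8n\<^sup>2)\<close> for
  some \<open>i\<close>; as \<open>Im z\<^sub>i = h Im r\<^sub>i / \<bar>y - r\<^sub>i\<bar>\<^sup>2\<close>, this gives \<open>\<bar>y - r\<^sub>i\<bar>\<^sup>2 \<le> 2n \<bar>h\<bar> \<bar>Im r\<^sub>i\<bar>\<close>.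

  The quotient \<open>Ptil/Ptil'\<close> at \<open>x\<close> is \<open>h/2\<^sup>k\<close> with \<open>h\<close> taken at \<open>y = 2\<^sup>k x\<close>, so \<open>\<bar>h\<bar> \<le> 2\<^sup>k 4/C\<^sub>1\<close>
  on \<open>E\<^sub>k\<close>. With \<open>K = 8n/C\<^sub>1\<close> and \<open>u\<^sub>i = \<bar>Im r\<^sub>i\<bar>/K\<close>, the set \<open>E\<^sub>k\<close> is therefore covered by \<open>n\<close>
  intervals of lengths \<open>2K sqrt (u\<^sub>i/2\<^sup>k)\<close>, the \<open>i\<close>-th one being empty while \<open>2\<^sup>k < u\<^sub>i\<close>. By
  subadditivity of \<open>t \<mapsto> t\<^sup>\<alpha>\<close>, \<open>\<Sum>\<^sub>k \<bar>E\<^sub>k\<bar>\<^sup>\<alpha>\<close> is then bounded by \<open>n\<close> geometric series of ratio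
  \<open>2 powr (-\<alpha>/2)\<close> with first term at most \<open>(2K)\<^sup>\<alpha>\<close>, whatever the roots are.
\<close>

section \<open>Logarithmic derivatives of split polynomials\<close>

lemma pderiv_linear_mult: "pderiv ([:a, 1:] * q) = [:a, 1:] * pderiv q + q"
proof -
  have "pderiv [:a, 1:] = 1" by (simp add: pderiv_pCons)
  then show ?thesis by (simp only: pderiv_mult mult_1_right)
qed

lemma prod_linear_lessThan_Suc:
  "(\<Prod>i<Suc m. [:-r i, 1:]) = [:-r m, 1:] * (\<Prod>i<m. [:-r i, 1:])"
  by (simp add: mult.commute)

lemma poly_pderiv_prod_linear:
  fixes r :: "nat \<Rightarrow> 'a::field"
  assumes "\<And>i. i < m \<Longrightarrow> x \<noteq> r i"
  shows "poly (pderiv (\<Prod>i<m. [:-r i, 1:])) x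
           = poly (\<Prod>i<m. [:-r i, 1:]) x * (\<Sum>i<m. 1 / (x - r i))"
  using assms
proof (induction m)
  case (Suc m)
  then have "x - r m \<noteq> 0" by simp
  with Suc show ?case
    unfolding prod_linear_lessThan_Suc pderiv_linear_mult by (simp add: field_simps)
qed simp

lemma poly_pderiv2_prod_linear:
  fixes r :: "nat \<Rightarrow> 'a::field"
  assumes "\<And>i. i < m \<Longrightarrow> x \<noteq> r i"
  shows "poly (pderiv (pderiv (\<Prod>i<m. [:-r i, 1:]))) x
           = poly (\<Prod>i<m. [:-r i, 1:]) x * ((\<Sum>i<m. 1 / (x - r i))^2 - (\<Sum>i<m. 1 / (x - r i)^2))"
  using assms
proof (induction m)
  case (Suc m)
  define Q where "Q = (\<Prod>i<m. [:-r i, 1:])"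
  define s1 where "s1 = (\<Sum>i<m. 1 / (x - r i))"
  define s2 where "s2 = (\<Sum>i<m. 1 / (x - r i)^2)"
  have d1: "poly (pderiv Q) x = poly Q x * s1"
    unfolding Q_def s1_def by (rule poly_pderiv_prod_linear) (use Suc.prems in auto)
  have d2: "poly (pderiv (pderiv Q)) x = poly Q x * (s1^2 - s2)"
    unfolding Q_def s1_def s2_def by (rule Suc.IH) (use Suc.prems in auto)
  have "x - r m \<noteq> 0" using Suc.prems by simp
  have "poly (pderiv (pderiv (\<Prod>i<Suc m. [:-r i, 1:]))) x
      = (x - r m) * (poly Q x * (s1^2 - s2)) + 2 * (poly Q x * s1)"
    unfolding prod_linear_lessThan_Suc pderiv_linear_mult pderiv_add Q_def[symmetric]
    by (simp add: d1 d2 algebra_simps)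
  also have "\<dots> = (x - r m) * poly Q x * ((s1 + 1 / (x - r m))^2 - (s2 + 1 / (x - r m)^2))"
  proof -
    have "d * (q * (a^2 - b)) + 2 * (q * a) = d * q * ((a + 1 / d)^2 - (b + 1 / d^2))"
      if "d \<noteq> 0" for d q a b :: 'a
      using that by (simp add: field_simps power2_eq_square)
    with \<open>x - r m \<noteq> 0\<close> show ?thesis by blast
  qed
  finally show ?case
    unfolding prod_linear_lessThan_Suc sum.lessThan_Suc poly_mult
      Q_def[symmetric] s1_def[symmetric] s2_def[symmetric] by simp
qed simp

text \<open>The derivative of the Newton step \<open>p / p'\<close>, by the quotient rule.\<close>
definition newton_deriv :: "'a::field poly \<Rightarrow> 'a \<Rightarrow> 'a" where
  "newton_deriv p x =
     (poly (pderiv p) x ^ 2 - poly p x * poly (pderiv (pderiv p)) x) / poly (pderiv p) x ^ 2"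

lemma newton_step_root_sums:
  fixes r :: "nat \<Rightarrow> 'a::field" and m :: nat
  defines "p \<equiv> \<Prod>i<m. [:-r i, 1:]"
  assumes "poly p x \<noteq> 0" and "poly (pderiv p) x \<noteq> 0"
  defines "h \<equiv> poly p x / poly (pderiv p) x"
  shows "(\<Sum>i<m. h / (x - r i)) = 1"
    and "(\<Sum>i<m. (h / (x - r i))^2) = newton_deriv p x"
proof -
  have roots: "x \<noteq> r i" if "i < m" for i
    using assms(2) that by (auto simp: p_def poly_prod)
  define s1 where "s1 = (\<Sum>i<m. 1 / (x - r i))"
  define s2 where "s2 = (\<Sum>i<m. 1 / (x - r i)^2)"
  have d1: "poly (pderiv p) x = poly p x * s1"
    unfolding p_def s1_def by (rule poly_pderiv_prod_linear) (use roots in auto)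
  have d2: "poly (pderiv (pderiv p)) x = poly p x * (s1^2 - s2)"
    unfolding p_def s1_def s2_def by (rule poly_pderiv2_prod_linear) (use roots in auto)
  have "s1 \<noteq> 0" using assms(3) d1 by auto
  then have h: "h = 1 / s1" using assms(2) by (simp add: h_def d1)
  have "(\<Sum>i<m. h / (x - r i)) = h * s1"
    by (simp add: s1_def sum_distrib_left)
  then show "(\<Sum>i<m. h / (x - r i)) = 1"
    using \<open>s1 \<noteq> 0\<close> by (simp add: h)
  have "(\<Sum>i<m. (h / (x - r i))^2) = h^2 * s2"
    by (simp add: s2_def sum_distrib_left power_divide)
  also have "\<dots> = newton_deriv p x"
    using \<open>s1 \<noteq> 0\<close> assms(2)
    by (simp add: h newton_deriv_def d1 d2 field_simps power2_eq_square)
  finally show "(\<Sum>i<m. (h / (x - r i))^2) = newton_deriv p x" .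
qed

section \<open>Points where the derivative of the Newton step is small\<close>

lemma exists_large_Im_if_sum_eq_one:
  fixes z :: "nat \<Rightarrow> complex"
  assumes "n > 0" and sum1: "(\<Sum>i<n. z i) = 1" and sum2: "Re (\<Sum>i<n. (z i)^2) \<le> 1 / (8 * real n)"
  shows "\<exists>i<n. 7 / (8 * (real n)^2) \<le> (Im (z i))^2"
proof (rule ccontr)
  assume "\<not> ?thesis"
  then have small: "(Im (z i))^2 < 7 / (8 * (real n)^2)" if "i < n" for i
    using that by force
  have "1 = (\<Sum>i<n. Re (z i))^2" using arg_cong[OF sum1, of Re] by (simp add: Re_sum)
  also have "\<dots> \<le> n * (\<Sum>i<n. (Re (z i))^2)"
    using sum_squared_le_sum_of_squares[of "\<lambda>i. Re (z i)" "{..<n}"] by (simp add: mult.commute)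
  also have "(\<Sum>i<n. (Re (z i))^2) = Re (\<Sum>i<n. (z i)^2) + (\<Sum>i<n. (Im (z i))^2)"
    by (simp add: Re_sum power2_eq_square sum.distrib[symmetric])
  also have "(\<Sum>i<n. (Im (z i))^2) < (\<Sum>i<n. 7 / (8 * (real n)^2))"
    using \<open>n > 0\<close> small by (intro sum_strict_mono) auto
  also have "\<dots> = 7 / (8 * real n)" by (simp add: power2_eq_square)
  finally show False
    using sum2 \<open>n > 0\<close> by (simp add: field_simps)
qed

lemma poly_map_poly_of_real:
  "poly (map_poly of_real p) (of_real x) = (of_real (poly p x) :: 'a::{real_algebra_1, comm_semiring_0})"
  by (induction p) (auto simp: map_poly_pCons)

lemma pderiv_map_poly_of_real:
  "pderiv (map_poly of_real p) = (map_poly of_real (pderiv p) :: complex poly)"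
  by (rule poly_eqI) (simp add: coeff_pderiv coeff_map_poly)

lemma newton_deriv_map_poly_of_real:
  "newton_deriv (map_poly of_real p) (of_real x) = (of_real (newton_deriv p x) :: complex)"
  by (simp add: newton_deriv_def pderiv_map_poly_of_real poly_map_poly_of_real)

lemma monic_real_poly_splits:
  fixes P :: "real poly"
  assumes "lead_coeff P = 1"
  obtains r :: "nat \<Rightarrow> complex" where "map_poly of_real P = (\<Prod>i<degree P. [:-r i, 1:])"
proof -
  let ?p = "map_poly of_real P :: complex poly"
  obtain r where r: "smult (lead_coeff ?p) (\<Prod>i<degree ?p. [:-r i, 1:]) = ?p"
    using complex_poly_decompose' by blast
  have "degree ?p = degree P" by (simp add: degree_map_poly)
  moreover have "lead_coeff ?p = 1" using assms by (simp add: degree_map_poly coeff_map_poly)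
  ultimately have "?p = (\<Prod>i<degree P. [:-r i, 1:])" using r by simp
  then show ?thesis by (rule that)
qed

lemma Im_of_real_divide_diff:
  "Im (of_real h / (of_real y - r)) = h * Im r / ((y - Re r)^2 + (Im r)^2)"
  by (simp add: Im_divide power2_eq_square)

lemma newton_step_root_sums_of_real:
  fixes P :: "real poly" and r :: "nat \<Rightarrow> complex"
  assumes P: "map_poly of_real P = (\<Prod>i<n. [:-r i, 1:])"
    and "poly P y \<noteq> 0" and "poly (pderiv P) y \<noteq> 0"
  defines "h \<equiv> poly P y / poly (pderiv P) y"
  shows "(\<Sum>i<n. of_real h / (of_real y - r i)) = 1"
    and "(\<Sum>i<n. (of_real h / (of_real y - r i))^2) = of_real (newton_deriv P y)"
proof -
  define p :: "complex poly" where "p = map_poly of_real P"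
  have p_y: "poly p (of_real y) = of_real (poly P y)"
    and p'_y: "poly (pderiv p) (of_real y) = of_real (poly (pderiv P) y)"
    by (simp_all add: p_def pderiv_map_poly_of_real poly_map_poly_of_real)
  have "poly p (of_real y) \<noteq> 0" "poly (pderiv p) (of_real y) \<noteq> 0"
    using assms(2,3) by (simp_all add: p_y p'_y)
  moreover have "of_real h = poly p (of_real y) / poly (pderiv p) (of_real y)"
    by (simp add: h_def p_y p'_y)
  ultimately show "(\<Sum>i<n. of_real h / (of_real y - r i)) = 1"
    and "(\<Sum>i<n. (of_real h / (of_real y - r i))^2) = of_real (newton_deriv P y)"
    using newton_step_root_sums[of r n "of_real y"]
    unfolding P[symmetric] p_def newton_deriv_map_poly_of_real[symmetric] by simp_all
qed

lemma near_nonreal_root_if_newton_deriv_small: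
  fixes P :: "real poly" and r :: "nat \<Rightarrow> complex"
  assumes P: "map_poly of_real P = (\<Prod>i<n. [:-r i, 1:])" and "n > 0"
    and "poly (pderiv P) y \<noteq> 0" and "\<bar>poly P y / poly (pderiv P) y\<bar> \<le> R"
    and "newton_deriv P y \<le> 1 / (8 * real n)"
  shows "\<exists>i<n. (y - Re (r i))^2 + (Im (r i))^2 \<le> 2 * real n * R * \<bar>Im (r i)\<bar>"
proof -
  define h where "h = poly P y / poly (pderiv P) y"
  have "poly P y \<noteq> 0"
  proof
    assume "poly P y = 0"
    then have "newton_deriv P y = 1" using assms(3) by (simp add: newton_deriv_def)
    with assms(5) \<open>n > 0\<close> show False by (simp add: field_simps)
  qed
  define z where "z i = of_real h / (of_real y - r i)" for i
  from newton_step_root_sums_of_real[OF P \<open>poly P y \<noteq> 0\<close> assms(3)] assms(2,5)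
  obtain i where "i < n" and large: "7 / (8 * (real n)^2) \<le> (Im (z i))^2"
    using exists_large_Im_if_sum_eq_one[of n z] by (auto simp: z_def h_def)
  define D where "D = (y - Re (r i))^2 + (Im (r i))^2"
  have Im_z: "Im (z i) = h * Im (r i) / D"
    by (simp add: z_def D_def Im_of_real_divide_diff)
  have "D \<noteq> 0" using large Im_z \<open>n > 0\<close> by auto
  then have "D > 0" by (simp add: D_def add_pos_nonneg order_le_neq_trans)
  have "\<bar>h\<bar> \<le> R" using assms(4) by (simp add: h_def)
  then have "h^2 \<le> R^2" by (metis abs_ge_zero power2_abs power_mono)
  have "7 * D^2 \<le> 8 * (real n)^2 * (h * Im (r i))^2"
    using large \<open>D > 0\<close> \<open>n > 0\<close> by (simp add: Im_z power_divide field_simps)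
  also have "\<dots> \<le> 8 * (real n)^2 * (R * Im (r i))^2"
    using \<open>h^2 \<le> R^2\<close> by (simp add: power_mult_distrib mult_left_mono mult_right_mono)
  finally have "7 * D^2 \<le> 8 * (real n * R * Im (r i))^2"
    by (simp add: power_mult_distrib)
  moreover have "(2 * real n * R * \<bar>Im (r i)\<bar>)^2 = 4 * (real n * R * Im (r i))^2"
    by (simp add: power_mult_distrib)
  ultimately have "D^2 \<le> (2 * real n * R * \<bar>Im (r i)\<bar>)^2"
    using zero_le_power2[of "real n * R * Im (r i)"] by linarith
  then have "D \<le> 2 * real n * R * \<bar>Im (r i)\<bar>"
    by (rule power2_le_imp_le) (use \<open>\<bar>h\<bar> \<le> R\<close> in simp)
  with \<open>i < n\<close> show ?thesis unfolding D_def by blast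
qed

section \<open>Subadditivity estimates\<close>

lemma powr_add_le_add_powr:
  fixes a b \<alpha> :: real
  assumes "0 \<le> a" and "0 \<le> b" and "0 < \<alpha>" and "\<alpha> \<le> 1"
  shows "(a + b) powr \<alpha> \<le> a powr \<alpha> + b powr \<alpha>"
proof (cases "a + b = 0")
  case False
  define s where "s = a + b"
  have "s > 0" using False assms by (simp add: s_def)
  have le_powr: "t \<le> t powr \<alpha>" if "0 \<le> t" "t \<le> 1" for t :: real
    using powr_mono'[of \<alpha> 1 t] that assms by simp
  have "s powr \<alpha> = s powr \<alpha> * (a / s + b / s)"
    using \<open>s > 0\<close> by (simp add: s_def add_divide_distrib[symmetric])
  also have "\<dots> \<le> s powr \<alpha> * ((a / s) powr \<alpha> + (b / s) powr \<alpha>)"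
    using assms \<open>s > 0\<close> le_powr[of "a / s"] le_powr[of "b / s"]
    by (intro mult_left_mono add_mono) (auto simp: s_def)
  also have "\<dots> = a powr \<alpha> + b powr \<alpha>"
    using assms \<open>s > 0\<close> by (simp add: powr_divide distrib_left)
  finally show ?thesis by (simp add: s_def)
qed (use assms in simp)

lemma powr_sum_le_sum_powr:
  fixes f :: "'a \<Rightarrow> real"
  assumes "\<And>i. i \<in> I \<Longrightarrow> 0 \<le> f i" and "0 < \<alpha>" and "\<alpha> \<le> 1"
  shows "(\<Sum>i\<in>I. f i) powr \<alpha> \<le> (\<Sum>i\<in>I. f i powr \<alpha>)"
  using assms(1)
proof (induction I rule: infinite_finite_induct)
  case (insert x F)
  have "(\<Sum>i\<in>insert x F. f i) powr \<alpha> \<le> f x powr \<alpha> + (\<Sum>i\<in>F. f i) powr \<alpha>"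
    using insert assms(2,3) by (simp add: powr_add_le_add_powr sum_nonneg)
  also have "\<dots> \<le> (\<Sum>i\<in>insert x F. f i powr \<alpha>)"
    using insert by simp
  finally show ?case .
qed simp_all

lemma summable_dominated_by_finite_sum:
  fixes f :: "nat \<Rightarrow> real" and g :: "'i \<Rightarrow> nat \<Rightarrow> real" and c B :: real
  assumes "finite I" and "0 \<le> c" and "\<And>k. 0 \<le> f k" and "\<And>k. f k \<le> c * (\<Sum>i\<in>I. g i k)"
    and "\<And>i. i \<in> I \<Longrightarrow> summable (g i)" and "\<And>i. i \<in> I \<Longrightarrow> suminf (g i) \<le> B"
  shows "summable f" and "suminf f \<le> c * (real (card I) * B)"
proof -
  have sum_g: "summable (\<lambda>k. \<Sum>i\<in>I. g i k)" using assms(5) by (rule summable_sum)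
  then have c_sum_g: "summable (\<lambda>k. c * (\<Sum>i\<in>I. g i k))" by (rule summable_mult)
  show "summable f"
    by (rule summable_comparison_test'[OF c_sum_g]) (use assms(3,4) in auto)
  then have "suminf f \<le> (\<Sum>k. c * (\<Sum>i\<in>I. g i k))"
    using c_sum_g assms(4) by (rule suminf_le[rotated 1])
  also have "\<dots> = c * (\<Sum>i\<in>I. suminf (g i))"
    using sum_g assms(5) by (simp add: suminf_mult suminf_sum)
  also have "\<dots> \<le> c * (real (card I) * B)"
    using sum_mono[of I "\<lambda>i. suminf (g i)" "\<lambda>_. B"] assms(2,6) by (simp add: mult_left_mono)
  finally show "suminf f \<le> c * (real (card I) * B)" .
qed

text \<open>The measure of a non-measurable set is 0, so \<open>A\<close> need not be measurable.\<close>
lemma measure_le_sum_cover: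
  assumes "A \<subseteq> (\<Union>i\<in>I. T i)" and "finite I" and "\<And>i. i \<in> I \<Longrightarrow> T i \<in> fmeasurable M"
  shows "measure M A \<le> (\<Sum>i\<in>I. measure M (T i))"
proof -
  have "measure M A \<le> measure M (\<Union>i\<in>I. T i)"
  proof (cases "A \<in> sets M")
    case True
    with assms show ?thesis by (intro measure_mono_fmeasurable fmeasurable.finite_UN) auto
  qed (simp add: measure_notin_sets)
  also have "\<dots> \<le> (\<Sum>i\<in>I. measure M (T i))"
    using assms by (intro measure_UNION_le) auto
  finally show ?thesis .
qed

section \<open>Dyadic intervals\<close>

definition dyadic_width :: "real \<Rightarrow> nat \<Rightarrow> real" where
  "dyadic_width u k = (if u \<le> 2 ^ k then sqrt (u / 2 ^ k) else 0)"

lemma near_root_subset_interval: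
  fixes K a b :: real
  assumes "K > 0"
  shows "{x. (2 ^ k * x - a)^2 + b^2 \<le> K * 2 ^ k * \<bar>b\<bar>}
           \<subseteq> {a / 2 ^ k - K * dyadic_width (\<bar>b\<bar> / K) k .. a / 2 ^ k + K * dyadic_width (\<bar>b\<bar> / K) k}"
proof
  fix x assume "x \<in> {x. (2 ^ k * x - a)^2 + b^2 \<le> K * 2 ^ k * \<bar>b\<bar>}"
  then have near: "(2 ^ k * x - a)^2 + b^2 \<le> K * 2 ^ k * \<bar>b\<bar>" by simp
  have "b^2 \<le> K * 2 ^ k * \<bar>b\<bar>"
    using near zero_le_power2[of "2 ^ k * x - a"] by linarith
  then have "\<bar>b\<bar> * \<bar>b\<bar> \<le> (K * 2 ^ k) * \<bar>b\<bar>"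
    by (simp add: abs_mult_self_eq power2_eq_square)
  then have "\<bar>b\<bar> \<le> K * 2 ^ k"
    using \<open>K > 0\<close> mult_le_cancel_right_pos[of "\<bar>b\<bar>" "\<bar>b\<bar>" "K * 2 ^ k"]
    by (cases "b = 0") auto
  then have "\<bar>b\<bar> / K \<le> 2 ^ k" using \<open>K > 0\<close> by (simp add: divide_le_eq mult.commute)
  have "(x - a / 2 ^ k)^2 = (2 ^ k * x - a)^2 / (2 ^ k)^2"
    by (simp add: field_simps power2_eq_square)
  also have "\<dots> \<le> K * 2 ^ k * \<bar>b\<bar> / (2 ^ k)^2"
    using near zero_le_power2[of b] by (intro divide_right_mono) (linarith, simp)
  also have "\<dots> = (K * sqrt (\<bar>b\<bar> / K / 2 ^ k))^2"
    using \<open>K > 0\<close> by (simp add: power_mult_distrib field_simps power2_eq_square)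
  finally have "\<bar>x - a / 2 ^ k\<bar> \<le> K * sqrt (\<bar>b\<bar> / K / 2 ^ k)"
    using \<open>K > 0\<close> by (simp add: power2_le_iff_abs_le)
  with \<open>\<bar>b\<bar> / K \<le> 2 ^ k\<close>
  show "x \<in> {a / 2 ^ k - K * dyadic_width (\<bar>b\<bar> / K) k .. a / 2 ^ k + K * dyadic_width (\<bar>b\<bar> / K) k}"
    by (simp add: dyadic_width_def abs_le_iff)
qed

lemma summable_dyadic_width_powr:
  assumes "u \<ge> 0" and "\<alpha> > 0"
  shows "summable (\<lambda>k. dyadic_width u k powr \<alpha>)"
    and "(\<Sum>k. dyadic_width u k powr \<alpha>) \<le> 1 / (1 - (1/2) powr (\<alpha>/2))"
proof -
  define q :: real where "q = (1/2) powr (\<alpha>/2)"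
  have "1 < (2::real) powr (\<alpha>/2)" using powr_less_cancel_iff[of 2 0 "\<alpha>/2"] assms by simp
  moreover have "q = 1 / 2 powr (\<alpha>/2)" by (simp add: q_def powr_divide)
  ultimately have "0 < q" "q < 1" by auto
  obtain k1 :: nat where "u \<le> 2 ^ k1"
    using real_arch_pow[of 2 u] by (auto intro: less_imp_le)
  define k0 where "k0 = (LEAST k. u \<le> 2 ^ k)"
  have "u \<le> 2 ^ k0" unfolding k0_def by (rule LeastI) fact
  define G where "G k = (if k0 \<le> k then q ^ (k - k0) else 0)" for k
  have dominated: "dyadic_width u k powr \<alpha> \<le> G k" for k
  proof (cases "k0 \<le> k")
    case True
    then obtain j where k: "k = k0 + j" using le_Suc_ex by blast
    have "u \<le> 2 ^ k" using \<open>u \<le> 2 ^ k0\<close> by (simp add: k power_add order_trans)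
    have "u / 2 ^ k \<le> (1/2) ^ j"
      using \<open>u \<le> 2 ^ k0\<close> by (simp add: k power_add field_simps)
    then have "sqrt (u / 2 ^ k) powr \<alpha> \<le> sqrt ((1/2) ^ j) powr \<alpha>"
      using assms by (intro powr_mono2 real_sqrt_le_mono) auto
    also have "sqrt ((1/2) ^ j) powr \<alpha> = q ^ j"
      by (simp add: q_def powr_half_sqrt[symmetric] powr_realpow[symmetric] powr_powr powr_power
                    mult_ac del: powr_half_sqrt)
    finally show ?thesis using True \<open>u \<le> 2 ^ k\<close> by (simp add: dyadic_width_def G_def k)
  next
    case False
    then have "k < k0" by simp
    then have "\<not> u \<le> 2 ^ k" unfolding k0_def by (rule not_less_Least)
    with False show ?thesis by (simp add: dyadic_width_def G_def)
  qed
  have "(\<lambda>j. G (j + k0)) sums (1 / (1 - q))"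
    using geometric_sums[of q] \<open>0 < q\<close> \<open>q < 1\<close> by (simp add: G_def)
  then have "G sums (1 / (1 - q))"
    by (subst (asm) sums_zero_iff_shift) (auto simp: G_def)
  then have "summable G" and "suminf G = 1 / (1 - q)" by (simp_all add: sums_iff)
  show summable: "summable (\<lambda>k. dyadic_width u k powr \<alpha>)"
    by (rule summable_comparison_test'[of G 0]) (use \<open>summable G\<close> dominated in auto)
  have "(\<Sum>k. dyadic_width u k powr \<alpha>) \<le> suminf G"
    by (rule suminf_le) (use dominated summable \<open>summable G\<close> in auto)
  with \<open>suminf G = 1 / (1 - q)\<close> show "(\<Sum>k. dyadic_width u k powr \<alpha>) \<le> 1 / (1 - (1/2) powr (\<alpha>/2))"
    by (simp add: q_def)
qed

section \<open>The sets \<open>E\<^sub>k\<close>\<close>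

lemma deriv_Ptil:
  "deriv (Ptil n P k) x = 2 powr (- (real n * real k)) * 2 ^ k * poly (pderiv P) (2 ^ k * x)"
proof (rule DERIV_imp_deriv)
  have "((\<lambda>x. poly P (2 ^ k * x)) has_real_derivative poly (pderiv P) (2 ^ k * x) * 2 ^ k) (at x)"
    by (rule DERIV_chain2[OF poly_DERIV]) (auto intro!: derivative_eq_intros)
  then show "(Ptil n P k has_real_derivative
      2 powr (- (real n * real k)) * 2 ^ k * poly (pderiv P) (2 ^ k * x)) (at x)"
    unfolding Ptil_def by (auto dest: DERIV_cmult[where c = "2 powr (- (real n * real k))"] simp: ac_simps)
qed

lemma Ptil_div_deriv_Ptil:
  "(\<lambda>x. Ptil n P k x / deriv (Ptil n P k) x)
     = (\<lambda>x. poly P (2 ^ k * x) / poly (pderiv P) (2 ^ k * x) / 2 ^ k)"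
  unfolding deriv_Ptil by (simp add: Ptil_def fun_eq_iff)

lemma has_field_derivative_poly_div_pderiv:
  fixes p :: "'a::real_normed_field poly"
  assumes "poly (pderiv p) x \<noteq> 0"
  shows "((\<lambda>x. poly p x / poly (pderiv p) x) has_field_derivative newton_deriv p x) (at x)"
  unfolding newton_deriv_def power2_eq_square
  by (rule DERIV_divide[OF poly_DERIV poly_DERIV assms])

lemma deriv_Ptil_div_deriv_Ptil:
  assumes "poly (pderiv P) (2 ^ k * x) \<noteq> 0"
  shows "deriv (\<lambda>x. Ptil n P k x / deriv (Ptil n P k) x) x = newton_deriv P (2 ^ k * x)"
proof -
  have "((\<lambda>x. 2 ^ k * x) has_real_derivative 2 ^ k) (at x)"
    by (auto intro!: derivative_eq_intros)
  from DERIV_chain2[OF has_field_derivative_poly_div_pderiv[OF assms] this]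
  have "((\<lambda>x. poly P (2 ^ k * x) / poly (pderiv P) (2 ^ k * x) / 2 ^ k) has_real_derivative
      newton_deriv P (2 ^ k * x) * 2 ^ k / 2 ^ k) (at x)"
    by (rule DERIV_cdivide)
  then show ?thesis
    unfolding Ptil_div_deriv_Ptil by (simp add: DERIV_imp_deriv)
qed

lemma mem_Eset_iff:
  "x \<in> Eset n C1 P k \<longleftrightarrow>
     poly (pderiv P) (2 ^ k * x) \<noteq> 0 \<and>
     \<bar>poly P (2 ^ k * x) / poly (pderiv P) (2 ^ k * x)\<bar> \<le> 2 ^ k * (4 / C1) \<and>
     newton_deriv P (2 ^ k * x) \<le> 1 / (8 * real n)"
proof -
  have nonzero: "deriv (Ptil n P k) x \<noteq> 0 \<longleftrightarrow> poly (pderiv P) (2 ^ k * x) \<noteq> 0"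
    by (simp add: deriv_Ptil)
  have "\<bar>q / 2 ^ k\<bar> \<le> 4 / C1 \<longleftrightarrow> \<bar>q\<bar> \<le> 2 ^ k * (4 / C1)" for q :: real
    by (simp add: abs_divide pos_divide_le_eq mult.commute)
  then have bounded: "\<bar>Ptil n P k x / deriv (Ptil n P k) x\<bar> \<le> 4 / C1 \<longleftrightarrow>
      \<bar>poly P (2 ^ k * x) / poly (pderiv P) (2 ^ k * x)\<bar> \<le> 2 ^ k * (4 / C1)"
    by (simp only: fun_cong[OF Ptil_div_deriv_Ptil])
  show ?thesis
    unfolding Eset_def mem_Collect_eq nonzero bounded
    using deriv_Ptil_div_deriv_Ptil[of P k x n] by auto
qed

lemma Eset_subset_near_roots:
  fixes P :: "real poly" and r :: "nat \<Rightarrow> complex"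
  assumes "map_poly of_real P = (\<Prod>i<n. [:-r i, 1:])" and "n > 0"
  shows "Eset n C1 P k \<subseteq>
    (\<Union>i<n. {x. (2 ^ k * x - Re (r i))^2 + (Im (r i))^2 \<le> 8 * real n / C1 * 2 ^ k * \<bar>Im (r i)\<bar>})"
proof
  fix x assume "x \<in> Eset n C1 P k"
  then have "poly (pderiv P) (2 ^ k * x) \<noteq> 0"
    and "\<bar>poly P (2 ^ k * x) / poly (pderiv P) (2 ^ k * x)\<bar> \<le> 2 ^ k * (4 / C1)"
    and "newton_deriv P (2 ^ k * x) \<le> 1 / (8 * real n)"
    unfolding mem_Eset_iff by blast+
  from near_nonreal_root_if_newton_deriv_small[OF assms this] obtain i where "i < n" and
    "(2 ^ k * x - Re (r i))^2 + (Im (r i))^2 \<le> 2 * real n * (2 ^ k * (4 / C1)) * \<bar>Im (r i)\<bar>"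
    by blast
  moreover have "2 * real n * (2 ^ k * (4 / C1)) = 8 * real n / C1 * 2 ^ k" by simp
  ultimately show "x \<in> (\<Union>i<n. {x. (2 ^ k * x - Re (r i))^2 + (Im (r i))^2
                                     \<le> 8 * real n / C1 * 2 ^ k * \<bar>Im (r i)\<bar>})"
    by (metis (mono_tags, lifting) UN_I lessThan_iff mem_Collect_eq)
qed

lemma measure_Eset_le:
  fixes P :: "real poly" and r :: "nat \<Rightarrow> complex"
  assumes "map_poly of_real P = (\<Prod>i<n. [:-r i, 1:])" and "n > 0" and "C1 > 0"
  defines "K \<equiv> 8 * real n / C1"
  shows "measure lebesgue (Eset n C1 P k) \<le> (\<Sum>i<n. 2 * K * dyadic_width (\<bar>Im (r i)\<bar> / K) k)"
proof -
  have "K > 0" using assms by (simp add: K_def)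
  define T where "T i = {Re (r i) / 2 ^ k - K * dyadic_width (\<bar>Im (r i)\<bar> / K) k ..
                         Re (r i) / 2 ^ k + K * dyadic_width (\<bar>Im (r i)\<bar> / K) k}" for i
  have "Eset n C1 P k \<subseteq>
      (\<Union>i<n. {x. (2 ^ k * x - Re (r i))^2 + (Im (r i))^2 \<le> K * 2 ^ k * \<bar>Im (r i)\<bar>})"
    using Eset_subset_near_roots[OF assms(1,2)] unfolding K_def .
  also have "\<dots> \<subseteq> (\<Union>i<n. T i)"
    unfolding T_def by (intro UN_mono order_refl near_root_subset_interval[OF \<open>K > 0\<close>])
  finally have "measure lebesgue (Eset n C1 P k) \<le> (\<Sum>i<n. measure lebesgue (T i))"
    by (rule measure_le_sum_cover) (auto simp: T_def)
  also have "\<dots> = (\<Sum>i<n. 2 * K * dyadic_width (\<bar>Im (r i)\<bar> / K) k)"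
    using \<open>K > 0\<close> by (intro sum.cong) (auto simp: T_def dyadic_width_def)
  finally show ?thesis .
qed

lemma measure_Eset_powr_le:
  fixes P :: "real poly" and r :: "nat \<Rightarrow> complex"
  assumes "map_poly of_real P = (\<Prod>i<n. [:-r i, 1:])" and "n > 0" and "C1 > 0"
    and "0 < \<alpha>" and "\<alpha> \<le> 1"
  defines "K \<equiv> 8 * real n / C1"
  shows "measure lebesgue (Eset n C1 P k) powr \<alpha>
           \<le> (2 * K) powr \<alpha> * (\<Sum>i<n. dyadic_width (\<bar>Im (r i)\<bar> / K) k powr \<alpha>)"
proof -
  have "K > 0" using assms by (simp add: K_def)
  have "measure lebesgue (Eset n C1 P k) powr \<alpha>
      \<le> (\<Sum>i<n. 2 * K * dyadic_width (\<bar>Im (r i)\<bar> / K) k) powr \<alpha>"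
    using measure_Eset_le[OF assms(1-3), of k] \<open>\<alpha> > 0\<close> by (intro powr_mono2) (auto simp: K_def)
  also have "\<dots> \<le> (\<Sum>i<n. (2 * K * dyadic_width (\<bar>Im (r i)\<bar> / K) k) powr \<alpha>)"
    using \<open>K > 0\<close> assms(4,5) by (intro powr_sum_le_sum_powr) (auto simp: dyadic_width_def)
  also have "\<dots> = (2 * K) powr \<alpha> * (\<Sum>i<n. dyadic_width (\<bar>Im (r i)\<bar> / K) k powr \<alpha>)"
    using \<open>K > 0\<close> by (simp add: powr_mult sum_distrib_left dyadic_width_def)
  finally show ?thesis .
qed

theorem lemma3p4:
  fixes n :: nat and C1 \<alpha> :: real
  assumes "n > 0" and "C1 > 0" and "0 < \<alpha>" and "\<alpha> < 1"
  shows "\<exists>C. \<forall>P :: real poly. degree P = n \<and> lead_coeff P = 1 \<longrightarrow>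
           summable (\<lambda>k. measure lebesgue (Eset n C1 P k) powr \<alpha>) \<and>
           (\<Sum>k. measure lebesgue (Eset n C1 P k) powr \<alpha>) \<le> C"
proof -
  define K where "K = 8 * real n / C1"
  have "K > 0" using assms by (simp add: K_def)
  show ?thesis
  proof (intro exI[of _ "(2 * K) powr \<alpha> * (real n * (1 / (1 - (1/2) powr (\<alpha>/2))))"] allI impI)
    fix P :: "real poly"
    assume "degree P = n \<and> lead_coeff P = 1"
    then obtain r :: "nat \<Rightarrow> complex" where fac: "map_poly of_real P = (\<Prod>i<n. [:-r i, 1:])"
      using monic_real_poly_splits[of P] by auto
    have "measure lebesgue (Eset n C1 P k) powr \<alpha>
            \<le> (2 * K) powr \<alpha> * (\<Sum>i<n. dyadic_width (\<bar>Im (r i)\<bar> / K) k powr \<alpha>)" for k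
      using measure_Eset_powr_le[OF fac assms(1-3) less_imp_le[OF assms(4)]] unfolding K_def .
    moreover have "summable (\<lambda>k. dyadic_width (\<bar>Im (r i)\<bar> / K) k powr \<alpha>)"
      and "(\<Sum>k. dyadic_width (\<bar>Im (r i)\<bar> / K) k powr \<alpha>) \<le> 1 / (1 - (1/2) powr (\<alpha>/2))" for i
      using summable_dyadic_width_powr[of "\<bar>Im (r i)\<bar> / K" \<alpha>] \<open>K > 0\<close> assms(3) by simp_all
    ultimately show "summable (\<lambda>k. measure lebesgue (Eset n C1 P k) powr \<alpha>) \<and>
        (\<Sum>k. measure lebesgue (Eset n C1 P k) powr \<alpha>)
          \<le> (2 * K) powr \<alpha> * (real n * (1 / (1 - (1/2) powr (\<alpha>/2))))"
      using summable_dominated_by_finite_sum[where I = "{..<n}" and c = "(2 * K) powr \<alpha>"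
          and g = "\<lambda>i k. dyadic_width (\<bar>Im (r i)\<bar> / K) k powr \<alpha>"
          and B = "1 / (1 - (1/2) powr (\<alpha>/2))"]
      by simp
  qed
qed

end
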